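(* Given $0<\alpha\le\beta<\infty$ there are positive numbers $c_0=c_0(\alpha,\beta)$, $c_1=c_1(\alpha,\beta)$ such that for every special Bernstein function $g$ with rate function $r=r[g]$, \[c_0\,r(t)\le|g(z)|\le c_1\,r(t)\] whenever $t>0$ and $\operatorname{Re}z\ge0$ satisfy $t|z|\in[\alpha,\beta]$. In particular one can take $c_0=1/(3e^2)$ when $\alpha=\beta=1$.
   Context: A Bernstein function $g\sim(a,b,\mu)$ is $g(z)=a+bz+\int_{(0,\infty)}(1-e^{-sz})\mu(\mathrm ds)$ with $a,b\ge0$, $\mu$ positive Radon on $(0,\infty)$, $\int\frac{s}{1+s}\mu(\mathrm ds)<\infty$, identified with its holomorphic extension to $\{\operatorname{Re}z>0\}$, continuous on $\{\operatorname{Re}z\ge0\}$. It is special if $g\ne0$ and $z/g(z)$ is again a Bernstein function. Rate function $r[g](t):=\frac a2+\frac bt+\int_{(0,\infty)}\min(s/t,1)\mu(\mathrm ds)$. *)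

theory Defs
  imports "HOL-Analysis.Analysis"
begin

definition bernstein_triple :: "real \<Rightarrow> real \<Rightarrow> real measure \<Rightarrow> bool" where
  "bernstein_triple a b \<mu> \<longleftrightarrow>
     a \<ge> 0 \<and> b \<ge> 0 \<and> sets \<mu> = sets borel \<and> emeasure \<mu> {..0} = 0 \<and>
     integrable \<mu> (\<lambda>s. s / (1 + s))"

text \<open>The Bernstein function g ~ (a,b,mu), evaluated at complex z (meaningful for Re z >= 0).\<close>
definition bernstein_fun :: "real \<Rightarrow> real \<Rightarrow> real measure \<Rightarrow> complex \<Rightarrow> complex" where
  "bernstein_fun a b \<mu> z =
     of_real a + of_real b * z + (\<integral>s. (1 - exp (- (of_real s * z))) \<partial>\<mu>)"

definition is_bernstein :: "(complex \<Rightarrow> complex) \<Rightarrow> bool" where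
  "is_bernstein f \<longleftrightarrow>
     (\<exists>a b \<mu>. bernstein_triple a b \<mu> \<and> (\<forall>z. Re z > 0 \<longrightarrow> f z = bernstein_fun a b \<mu> z))"

definition special_bernstein :: "real \<Rightarrow> real \<Rightarrow> real measure \<Rightarrow> bool" where
  "special_bernstein a b \<mu> \<longleftrightarrow>
     bernstein_triple a b \<mu> \<and>
     (\<exists>z. Re z > 0 \<and> bernstein_fun a b \<mu> z \<noteq> 0) \<and>
     is_bernstein (\<lambda>z. z / bernstein_fun a b \<mu> z)"

definition rate_fun :: "real \<Rightarrow> real \<Rightarrow> real measure \<Rightarrow> real \<Rightarrow> real" where
  "rate_fun a b \<mu> t = a / 2 + b / t + (\<integral>s. min (s / t) 1 \<partial>\<mu>)"

end

theory Submission
  imports Defs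
begin

text \<open>
  The kernel satisfies |1 - exp(-s z)| <= min (s |z|) 2, hence
  |1 - exp(-s z)| <= max 2 beta * min (s/t) 1 whenever t |z| <= beta; integrating gives
  |g(z)| <= max 2 beta * r(t) for every Bernstein function.

  On the real side, 1 - exp(-u) >= K min u 1 with K = 1 - 1/e, which gives
  K r(1/Re w) <= Re g(w).  If g is special, g(z) g*(z) = z on the closed half plane for a
  second Bernstein function g* (the identity extends from Re z > 0 by continuity, and g has
  no zeros for Re z > 0 because g vanishes at a single such point only if r = 0).
  Evaluating at z = 1/t yields K^2 r(t) r*(t) <= 1/t, and combining with the upper bound
  |g*(z)| <= max 2 beta * r*(t) gives |g(z)| = |z| / |g*(z)| >= alpha K^2 / max 2 beta * r(t).
  For alpha = beta = 1 the constant K^2/2 exceeds 1/(3 e^2).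
\<close>

section \<open>Elementary estimates for the kernel 1 - exp(-u)\<close>

text \<open>On the closed right half plane, u \<mapsto> exp(-u) is 1-Lipschitz, so |1 - exp(-u)| <= |u|.\<close>
lemma norm_one_minus_exp_le_norm:
  fixes u :: complex assumes "Re u \<ge> 0"
  shows "cmod (1 - exp (- u)) \<le> cmod u"
proof -
  have "norm ((\<lambda>w. exp (- w)) 0 - (\<lambda>w. exp (- w)) u) \<le> 1 * norm (0 - u)"
  proof (rule field_differentiable_bound[OF convex_halfspace_Re_ge[of 0]])
    fix z :: complex assume "z \<in> {x. 0 \<le> Re x}"
    then show "((\<lambda>w. exp (- w)) has_field_derivative (- exp (- z))) (at z within {x. 0 \<le> Re x})"
      by (auto intro!: derivative_eq_intros)
    show "norm (- exp (- z)) \<le> 1" using \<open>z \<in> _\<close> by (simp add: norm_exp_eq_Re)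
  qed (use assms in auto)
  then show ?thesis by simp
qed

lemma norm_one_minus_exp_le_2:
  fixes u :: complex assumes "Re u \<ge> 0"
  shows "cmod (1 - exp (- u)) \<le> 2"
proof -
  have "cmod (1 - exp (- u)) \<le> 1 + cmod (exp (- u))"
    using norm_triangle_ineq4[of 1 "exp (- u)"] by simp
  also have "cmod (exp (- u)) \<le> 1" using assms by (simp add: norm_exp_eq_Re)
  finally show ?thesis by simp
qed

lemma kernel_norm_le:
  assumes "s \<ge> 0" "Re w \<ge> 0"
  shows "cmod (1 - exp (- (of_real s * w))) \<le> min (s * cmod w) 2"
  using norm_one_minus_exp_le_norm[of "of_real s * w"] norm_one_minus_exp_le_2[of "of_real s * w"] assms
  by (simp add: norm_mult)

text \<open>By convexity of exp, 1 - exp(-u) >= (1 - 1/e) min u 1 for u >= 0.\<close>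
lemma one_minus_exp_ge_min:
  fixes u :: real assumes "u \<ge> 0"
  shows "(1 - exp (-1)) * min u 1 \<le> 1 - exp (- u)"
proof (cases "u \<le> 1")
  case True
  have "exp ((1 - u) *\<^sub>R 0 + u *\<^sub>R (-1)) \<le> (1 - u) * exp 0 + u * exp (-1)"
    using convex_onD[OF exp_convex, of u 0 "-1"] True assms by simp
  then show ?thesis using True by (simp add: algebra_simps)
qed simp

text \<open>Any function of the form min (c s) K is dominated by a multiple of s/(1+s), the weight
  that Bernstein measures integrate.\<close>
lemma min_le_mult_frac:
  fixes s c K :: real assumes "s > 0" "c \<ge> 0" "K \<ge> 0"
  shows "min (c * s) K \<le> max (2 * c) (2 * K) * (s / (1 + s))"
proof (cases "s \<le> 1")
  case True
  have "c * s \<le> 2 * c * (s / (1 + s))"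
    using assms True by (simp add: field_simps mult_left_mono)
  also have "\<dots> \<le> max (2 * c) (2 * K) * (s / (1 + s))"
    using assms by (intro mult_right_mono) auto
  finally show ?thesis by simp
next
  case False
  have "K \<le> 2 * K * (s / (1 + s))"
    using assms False mult_left_mono[of 1 s K] by (simp add: field_simps)
  also have "\<dots> \<le> max (2 * c) (2 * K) * (s / (1 + s))"
    using assms by (intro mult_right_mono) auto
  finally show ?thesis by simp
qed

text \<open>The truncated ratio min (s/t) 1 is controlled by min (s/t0) 1 up to the factor
  max 1 (t0/t); this is the monotonicity behind the doubling property of rate functions.\<close>
lemma min_ratio_le:
  fixes s t t0 :: real assumes "s \<ge> 0" "t > 0" "t0 > 0"
  shows "min (s / t) 1 \<le> max 1 (t0 / t) * min (s / t0) 1"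
proof (cases "s / t0 \<le> 1")
  case True
  have "s / t = (t0 / t) * (s / t0)" using assms by simp
  also have "\<dots> \<le> max 1 (t0 / t) * (s / t0)" using assms by (intro mult_right_mono) auto
  finally show ?thesis using True by simp
qed (simp add: le_max_iff_disj)

section \<open>Measure-theoretic facts about Bernstein triples\<close>

lemma bernstein_triple_nonneg:
  assumes "bernstein_triple a b \<mu>" shows "a \<ge> 0" "b \<ge> 0"
  using assms by (auto simp: bernstein_triple_def)

lemma bernstein_triple_AE_pos:
  assumes "bernstein_triple a b \<mu>" shows "AE s in \<mu>. s > 0"
proof (rule AE_I')
  show "{..0::real} \<in> null_sets \<mu>" using assms by (auto simp: bernstein_triple_def null_sets_def)
qed auto

lemma bernstein_triple_measurable:
  assumes "bernstein_triple a b \<mu>" "f \<in> borel_measurable borel"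
  shows "f \<in> borel_measurable \<mu>"
  using assms measurable_cong_sets[of \<mu> borel borel borel] by (auto simp: bernstein_triple_def)

lemma bernstein_triple_integrable_min_bound:
  fixes f :: "real \<Rightarrow> 'b::{banach, second_countable_topology}"
  assumes bt: "bernstein_triple a b \<mu>" and f: "f \<in> borel_measurable borel"
    and c: "c \<ge> 0" and K: "K \<ge> 0" and bound: "\<And>s. s > 0 \<Longrightarrow> norm (f s) \<le> min (c * s) K"
  shows "integrable \<mu> f"
proof (rule Bochner_Integration.integrable_bound)
  show "integrable \<mu> (\<lambda>s. max (2 * c) (2 * K) * (s / (1 + s)))"
    using bt by (intro integrable_mult_right) (simp add: bernstein_triple_def)
  show "f \<in> borel_measurable \<mu>" by (rule bernstein_triple_measurable[OF bt f])
  show "AE s in \<mu>. norm (f s) \<le> norm (max (2 * c) (2 * K) * (s / (1 + s)))"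
    using bernstein_triple_AE_pos[OF bt]
  proof eventually_elim
    case (elim s)
    then have "norm (f s) \<le> max (2 * c) (2 * K) * (s / (1 + s))"
      using bound[OF elim] min_le_mult_frac[OF elim c K] by linarith
    then show ?case using elim c K by (simp add: abs_of_nonneg)
  qed
qed

lemma integrable_min_ratio:
  assumes "bernstein_triple a b \<mu>" "t > 0"
  shows "integrable \<mu> (\<lambda>s. min (s / t) 1)"
  by (rule bernstein_triple_integrable_min_bound[OF assms(1) _ _ zero_le_one, where c = "1 / t"])
     (use assms(2) in auto)

lemma integrable_kernel:
  assumes "bernstein_triple a b \<mu>" "Re z \<ge> 0"
  shows "integrable \<mu> (\<lambda>s. 1 - exp (- (of_real s * z)))"
  by (rule bernstein_triple_integrable_min_bound[OF assms(1), where c = "cmod z" and K = 2])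
     (use kernel_norm_le assms(2) in \<open>auto simp: mult.commute\<close>)

section \<open>Properties of the rate function\<close>

lemma rate_fun_nonneg:
  assumes bt: "bernstein_triple a b \<mu>" and t: "t > 0"
  shows "rate_fun a b \<mu> t \<ge> 0"
proof -
  have "AE s in \<mu>. 0 \<le> min (s / t) 1"
    using bernstein_triple_AE_pos[OF bt] by eventually_elim (use t in simp)
  then have "(\<integral>s. min (s / t) 1 \<partial>\<mu>) \<ge> 0" by (rule integral_nonneg_AE)
  then show ?thesis using bernstein_triple_nonneg[OF bt] t unfolding rate_fun_def by simp
qed

lemma rate_fun_le_scaled:
  assumes bt: "bernstein_triple a b \<mu>" and t: "t > 0" and t0: "t0 > 0"
  shows "rate_fun a b \<mu> t \<le> max 1 (t0 / t) * rate_fun a b \<mu> t0"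
proof -
  let ?M = "max 1 (t0 / t)"
  have ab: "a \<ge> 0" "b \<ge> 0" using bernstein_triple_nonneg[OF bt] by auto
  have "a / 2 \<le> ?M * (a / 2)" using ab mult_right_mono[of 1 ?M "a/2"] by simp
  moreover have "b / t \<le> ?M * (b / t0)"
  proof -
    have "b / t = (t0 / t) * (b / t0)" using t0 by simp
    also have "\<dots> \<le> ?M * (b / t0)" using ab t0 by (intro mult_right_mono) auto
    finally show ?thesis .
  qed
  moreover have "(\<integral>s. min (s / t) 1 \<partial>\<mu>) \<le> (\<integral>s. ?M * min (s / t0) 1 \<partial>\<mu>)"
    using integrable_min_ratio[OF bt t] integrable_mult_right[OF integrable_min_ratio[OF bt t0]]
  proof (rule integral_mono_AE)
    show "AE s in \<mu>. min (s / t) 1 \<le> ?M * min (s / t0) 1"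
      using bernstein_triple_AE_pos[OF bt] by eventually_elim (use min_ratio_le t t0 in auto)
  qed
  ultimately show ?thesis unfolding rate_fun_def by (simp add: distrib_left)
qed

section \<open>Upper and lower estimates for Bernstein functions\<close>

lemma bernstein_fun_upper:
  assumes bt: "bernstein_triple a b \<mu>" and t: "t > 0" and z: "Re z \<ge> 0"
    and tz: "t * cmod z \<le> \<beta>"
  shows "cmod (bernstein_fun a b \<mu> z) \<le> max 2 \<beta> * rate_fun a b \<mu> t"
proof -
  let ?M = "max 2 \<beta>"
  let ?f = "\<lambda>s. 1 - exp (- (of_real s * z))"
  have ab: "a \<ge> 0" "b \<ge> 0" using bernstein_triple_nonneg[OF bt] by auto
  have cz: "cmod z \<le> \<beta> / t" using tz t by (simp add: field_simps mult.commute)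
  have kernel: "cmod (?f s) \<le> ?M * min (s / t) 1" if "s > 0" for s
  proof (cases "s / t \<le> 1")
    case True
    have "s * cmod z \<le> s * (\<beta> / t)" using cz that by (intro mult_left_mono) auto
    also have "\<dots> \<le> ?M * (s / t)" using that t mult_right_mono[of \<beta> ?M "s / t"] by (simp add: mult.commute)
    finally show ?thesis using kernel_norm_le[of s z] that z True by simp
  next
    case False
    then show ?thesis using kernel_norm_le[of s z] that z by (simp add: le_max_iff_disj)
  qed
  have "cmod (bernstein_fun a b \<mu> z) \<le> cmod (of_real a + of_real b * z) + cmod (integral\<^sup>L \<mu> ?f)"
    unfolding bernstein_fun_def by (rule norm_triangle_ineq)
  also have "cmod (of_real a + of_real b * z) \<le> a + b * cmod z"
    using ab norm_triangle_ineq[of "of_real a" "of_real b * z"] by (simp add: norm_mult)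
  also have "cmod (integral\<^sup>L \<mu> ?f) \<le> (\<integral>s. cmod (?f s) \<partial>\<mu>)"
    by (rule integral_norm_bound)
  also have "(\<integral>s. cmod (?f s) \<partial>\<mu>) \<le> (\<integral>s. ?M * min (s / t) 1 \<partial>\<mu>)"
    using integrable_norm[OF integrable_kernel[OF bt z]]
      integrable_mult_right[OF integrable_min_ratio[OF bt t]]
  proof (rule integral_mono_AE)
    show "AE s in \<mu>. cmod (?f s) \<le> ?M * min (s / t) 1"
      using bernstein_triple_AE_pos[OF bt] by eventually_elim (rule kernel)
  qed
  also have "b * cmod z \<le> ?M * (b / t)"
    using mult_left_mono[OF cz ab(2)] mult_right_mono[of \<beta> ?M "b / t"] ab t by (simp add: mult.commute)
  also have "a \<le> ?M * (a / 2)"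
    using ab mult_right_mono[of 2 ?M "a / 2"] by simp
  finally show ?thesis unfolding rate_fun_def by (simp add: algebra_simps)
qed

lemma bernstein_fun_Re_lower:
  assumes bt: "bernstein_triple a b \<mu>" and w: "Re w > 0"
  shows "(1 - exp (-1)) * rate_fun a b \<mu> (1 / Re w) \<le> Re (bernstein_fun a b \<mu> w)"
proof -
  let ?K = "1 - exp (-1::real)"
  let ?f = "\<lambda>s. 1 - exp (- (of_real s * w))"
  have ab: "a \<ge> 0" "b \<ge> 0" using bernstein_triple_nonneg[OF bt] by auto
  have K: "0 < ?K" "?K \<le> 1" by auto
  have int_f: "integrable \<mu> ?f" by (rule integrable_kernel[OF bt less_imp_le[OF w]])
  have kernel: "?K * min (s * Re w) 1 \<le> Re (?f s)" if "s > 0" for s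
  proof -
    have "?K * min (s * Re w) 1 \<le> 1 - exp (- (s * Re w))"
      using that w by (intro one_minus_exp_ge_min) auto
    moreover have "exp (- (s * Re w)) * cos (s * Im w) \<le> exp (- (s * Re w))"
      by (rule mult_left_le) auto
    moreover have "Re (?f s) = 1 - exp (- (s * Re w)) * cos (s * Im w)"
      by (simp add: Re_exp)
    ultimately show ?thesis by linarith
  qed
  have int_min: "integrable \<mu> (\<lambda>s. ?K * min (s * Re w) 1)"
    using integrable_min_ratio[OF bt, of "1 / Re w"] w by simp
  have "?K * (\<integral>s. min (s * Re w) 1 \<partial>\<mu>) = (\<integral>s. ?K * min (s * Re w) 1 \<partial>\<mu>)"
    by simp
  also have "\<dots> \<le> (\<integral>s. Re (?f s) \<partial>\<mu>)"
    using int_min integrable_Re[OF int_f]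
  proof (rule integral_mono_AE)
    show "AE s in \<mu>. ?K * min (s * Re w) 1 \<le> Re (?f s)"
      using bernstein_triple_AE_pos[OF bt] by eventually_elim (rule kernel)
  qed
  finally have "?K * (\<integral>s. min (s * Re w) 1 \<partial>\<mu>) \<le> (\<integral>s. Re (?f s) \<partial>\<mu>)" .
  moreover have "?K * (a / 2) \<le> a" using K ab
    by (intro order.trans[OF mult_left_le_one_le[of "a/2" ?K]]) auto
  moreover have "?K * (b * Re w) \<le> b * Re w" using K ab w
    by (intro mult_left_le_one_le) auto
  moreover have "Re (bernstein_fun a b \<mu> w) = a + b * Re w + (\<integral>s. Re (?f s) \<partial>\<mu>)"
    unfolding bernstein_fun_def using integral_Re[OF int_f] by simp
  ultimately show ?thesis unfolding rate_fun_def by (simp add: distrib_left)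
qed

text \<open>Bernstein functions are continuous on the closed half plane (dominated convergence).\<close>
lemma bernstein_fun_continuous:
  assumes bt: "bernstein_triple a b \<mu>"
  shows "continuous_on {z. 0 \<le> Re z} (bernstein_fun a b \<mu>)"
proof (rule continuous_on_sequentiallyI)
  fix w :: "nat \<Rightarrow> complex" and z
  assume wH: "\<forall>n. w n \<in> {z. 0 \<le> Re z}" and lim: "w \<longlonglongrightarrow> z"
  obtain B where B: "B > 0" "\<And>n. cmod (w n) \<le> B"
    using convergent_imp_Bseq[OF convergentI[OF lim]] by (auto elim: BseqE)
  have "(\<lambda>n. \<integral>s. 1 - exp (- (of_real s * w n)) \<partial>\<mu>) \<longlonglongrightarrow> (\<integral>s. 1 - exp (- (of_real s * z)) \<partial>\<mu>)"
  proof (rule integral_dominated_convergence[where w="\<lambda>s. max (2 * B) (2 * 2) * (s / (1 + s))"])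
    show "(\<lambda>s. 1 - exp (- (of_real s * z))) \<in> borel_measurable \<mu>"
      "\<And>n. (\<lambda>s. 1 - exp (- (of_real s * w n))) \<in> borel_measurable \<mu>"
      by (rule bernstein_triple_measurable[OF bt], measurable)+
    show "integrable \<mu> (\<lambda>s. max (2 * B) (2 * 2) * (s / (1 + s)))"
      using bt by (intro integrable_mult_right) (simp add: bernstein_triple_def)
    show "AE s in \<mu>. (\<lambda>n. 1 - exp (- (of_real s * w n))) \<longlonglongrightarrow> 1 - exp (- (of_real s * z))"
      by (intro AE_I2 tendsto_intros lim)
    show "AE s in \<mu>. norm (1 - exp (- (of_real s * w n))) \<le> max (2 * B) (2 * 2) * (s / (1 + s))" for n
      using bernstein_triple_AE_pos[OF bt]
    proof eventually_elim
      case (elim s)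
      have "norm (1 - exp (- (of_real s * w n))) \<le> min (s * cmod (w n)) 2"
        using kernel_norm_le[of s "w n"] elim wH by simp
      also have "\<dots> \<le> min (B * s) 2"
        using B(2)[of n] elim by (intro min.mono) (auto simp: mult.commute intro: mult_left_mono)
      also have "\<dots> \<le> max (2 * B) (2 * 2) * (s / (1 + s))"
        using elim B by (intro min_le_mult_frac) auto
      finally show ?case .
    qed
  qed
  then show "(\<lambda>n. bernstein_fun a b \<mu> (w n)) \<longlonglongrightarrow> bernstein_fun a b \<mu> z"
    unfolding bernstein_fun_def by (intro tendsto_intros lim)
qed

text \<open>A Bernstein function vanishing at one point of the open half plane vanishes everywhere:
  the real-part bound forces r = 0 at one scale, hence at all scales, and then the upper
  bound forces g = 0.\<close>
lemma bernstein_fun_nonzero: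
  assumes bt: "bernstein_triple a b \<mu>"
    and z0: "Re z0 > 0" "bernstein_fun a b \<mu> z0 \<noteq> 0" and w: "Re w > 0"
  shows "bernstein_fun a b \<mu> w \<noteq> 0"
proof
  assume "bernstein_fun a b \<mu> w = 0"
  then have "(1 - exp (-1)) * rate_fun a b \<mu> (1 / Re w) \<le> 0"
    using bernstein_fun_Re_lower[OF bt w] by simp
  then have r0: "rate_fun a b \<mu> (1 / Re w) \<le> 0" by (simp add: mult_le_0_iff)
  let ?t = "1 / cmod z0"
  have t: "?t > 0" using z0 by auto
  have "cmod (bernstein_fun a b \<mu> z0) \<le> max 2 1 * rate_fun a b \<mu> ?t"
    using bernstein_fun_upper[OF bt t _, of z0 1] z0 by auto
  also have "\<dots> \<le> 2 * (max 1 ((1 / Re w) / ?t) * rate_fun a b \<mu> (1 / Re w))"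
    using rate_fun_le_scaled[OF bt t, of "1 / Re w"] w by simp
  also have "\<dots> \<le> 0" using r0 by (simp add: mult_nonneg_nonpos)
  finally show False using z0(2) by simp
qed

section \<open>Special Bernstein functions\<close>

lemma special_bernstein_conjugate:
  assumes sp: "special_bernstein a b \<mu>"
  obtains a' b' \<mu>' where "bernstein_triple a' b' \<mu>'"
    "\<And>z. Re z \<ge> 0 \<Longrightarrow> bernstein_fun a b \<mu> z * bernstein_fun a' b' \<mu>' z = z"
proof -
  have bt: "bernstein_triple a b \<mu>" using sp by (simp add: special_bernstein_def)
  obtain z0 where z0: "Re z0 > 0" "bernstein_fun a b \<mu> z0 \<noteq> 0"
    using sp by (auto simp: special_bernstein_def)
  obtain a' b' \<mu>' where bt': "bernstein_triple a' b' \<mu>'"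
    and conj: "\<And>z. Re z > 0 \<Longrightarrow> z / bernstein_fun a b \<mu> z = bernstein_fun a' b' \<mu>' z"
    using sp by (auto simp: special_bernstein_def is_bernstein_def)
  have open_half: "bernstein_fun a b \<mu> w * bernstein_fun a' b' \<mu>' w = w" if "Re w > 0" for w
    using conj[OF that] bernstein_fun_nonzero[OF bt z0 that] by (simp add: field_simps)
  show ?thesis
  proof (rule that[OF bt'])
    fix z :: complex assume z: "Re z \<ge> 0"
    define w where "w n = z + of_real (inverse (real (Suc n)))" for n
    have w_lim: "w \<longlonglongrightarrow> z"
      unfolding w_def
      using tendsto_add[OF tendsto_const tendsto_of_real[OF LIMSEQ_inverse_real_of_nat], of z]
      by simp
    have w_pos: "Re (w n) > 0" for n using z unfolding w_def by (simp add: add_nonneg_pos)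
    have "(\<lambda>n. bernstein_fun a b \<mu> (w n) * bernstein_fun a' b' \<mu>' (w n)) \<longlonglongrightarrow>
            bernstein_fun a b \<mu> z * bernstein_fun a' b' \<mu>' z"
      using w_pos z w_lim
        bernstein_fun_continuous[OF bt, unfolded continuous_on_sequentially]
        bernstein_fun_continuous[OF bt', unfolded continuous_on_sequentially]
      by (intro tendsto_mult) (auto simp: o_def less_imp_le)
    moreover have "(\<lambda>n. bernstein_fun a b \<mu> (w n) * bernstein_fun a' b' \<mu>' (w n)) = w"
      using open_half w_pos by auto
    ultimately show "bernstein_fun a b \<mu> z * bernstein_fun a' b' \<mu>' z = z"
      using w_lim LIMSEQ_unique by metis
  qed
qed

lemma conjugate_rate_product_le:
  assumes bt: "bernstein_triple a b \<mu>" and bt': "bernstein_triple a' b' \<mu>'"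
    and conj: "\<And>z. Re z \<ge> 0 \<Longrightarrow> bernstein_fun a b \<mu> z * bernstein_fun a' b' \<mu>' z = z"
    and t: "t > 0"
  shows "(1 - exp (-1))^2 * (rate_fun a b \<mu> t * rate_fun a' b' \<mu>' t) \<le> 1 / t"
proof -
  let ?K = "1 - exp (-1::real)"
  let ?x = "complex_of_real (1 / t)"
  have x: "Re ?x > 0" "1 / Re ?x = t" using t by auto
  have low: "?K * rate_fun a b \<mu> t \<le> cmod (bernstein_fun a b \<mu> ?x)"
    "?K * rate_fun a' b' \<mu>' t \<le> cmod (bernstein_fun a' b' \<mu>' ?x)"
    using bernstein_fun_Re_lower[OF bt x(1)] bernstein_fun_Re_lower[OF bt' x(1)] x(2)
      complex_Re_le_cmod[of "bernstein_fun a b \<mu> ?x"] complex_Re_le_cmod[of "bernstein_fun a' b' \<mu>' ?x"]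
    by auto
  have "cmod (bernstein_fun a b \<mu> ?x) * cmod (bernstein_fun a' b' \<mu>' ?x) = 1 / t"
    using conj[of ?x] x t by (metis less_imp_le norm_mult norm_of_real abs_of_pos zero_less_divide_1_iff)
  moreover have "(?K * rate_fun a b \<mu> t) * (?K * rate_fun a' b' \<mu>' t)
      \<le> cmod (bernstein_fun a b \<mu> ?x) * cmod (bernstein_fun a' b' \<mu>' ?x)"
    using low rate_fun_nonneg[OF bt t] rate_fun_nonneg[OF bt' t] by (intro mult_mono) auto
  ultimately show ?thesis by (simp add: power2_eq_square algebra_simps)
qed

lemma special_bernstein_lower:
  assumes sp: "special_bernstein a b \<mu>" and t: "t > 0" and z: "Re z \<ge> 0"
    and al: "\<alpha> \<le> t * cmod z" and be: "t * cmod z \<le> \<beta>" and a0: "\<alpha> > 0"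
  shows "\<alpha> * (1 - exp (-1))^2 / max 2 \<beta> * rate_fun a b \<mu> t \<le> cmod (bernstein_fun a b \<mu> z)"
proof -
  have bt: "bernstein_triple a b \<mu>" using sp by (simp add: special_bernstein_def)
  obtain a' b' \<mu>' where bt': "bernstein_triple a' b' \<mu>'"
    and conj: "\<And>z. Re z \<ge> 0 \<Longrightarrow> bernstein_fun a b \<mu> z * bernstein_fun a' b' \<mu>' z = z"
    using special_bernstein_conjugate[OF sp] by blast
  let ?K = "1 - exp (-1::real)" and ?M = "max 2 \<beta>"
  let ?r = "rate_fun a b \<mu> t" and ?r' = "rate_fun a' b' \<mu>' t"
  let ?G = "cmod (bernstein_fun a b \<mu> z)" and ?H = "cmod (bernstein_fun a' b' \<mu>' z)"
  have r: "?r \<ge> 0" by (rule rate_fun_nonneg[OF bt t])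
  have prod: "?K^2 * (?r * ?r') \<le> 1 / t" by (rule conjugate_rate_product_le[OF bt bt' conj t])
  have GH: "?G * ?H = cmod z" using conj[OF z] by (metis norm_mult)
  have cz: "cmod z > 0" using al a0 t by auto
  have H: "?H > 0" using GH cz by auto
  have H_upper: "?H \<le> ?M * ?r'" by (rule bernstein_fun_upper[OF bt' t z be])
  have "0 < ?M * ?r'" using H H_upper by linarith
  then have r': "?r' > 0" by (simp add: zero_less_mult_iff)
  have "\<alpha> * ?K^2 / ?M * ?r \<le> (t * cmod z) * ?K^2 / ?M * ?r"
    using al r by (intro mult_right_mono divide_right_mono mult_right_mono) auto
  also have "\<dots> = cmod z / (?M * ?r') * (t * (?K^2 * (?r * ?r')))"
    using r' by (simp add: field_simps power2_eq_square)
  also have "\<dots> \<le> cmod z / (?M * ?r') * 1"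
    using prod t cz r' by (intro mult_left_mono) (auto simp: field_simps)
  also have "\<dots> \<le> cmod z / ?H" using H H_upper cz r' by (simp add: frac_le)
  also have "\<dots> = ?G" using GH H by (simp add: field_simps)
  finally show ?thesis .
qed

text \<open>The explicit constant for alpha = beta = 1: (1 - 1/e)^2 / 2 >= 1/(3 e^2), since e - 1 >= 1.\<close>
lemma explicit_constant_le: "1 / (3 * exp 2) \<le> (1 - exp (-1::real))^2 / 2"
proof -
  have e: "1 \<le> exp (1::real) - 1" using exp_ge_add_one_self[of 1] by simp
  have "1 \<le> (exp (1::real) - 1)^2" using power_mono[OF e, of 2] by simp
  then have "1 / (3 * (exp 1 * exp 1)) \<le> (exp 1 - 1)^2 / (2 * (exp 1 * exp (1::real)))"
    by (simp add: field_simps)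
  moreover have "(1 - exp (-1::real))^2 / 2 = (exp 1 - 1)^2 / (2 * (exp 1 * exp 1))"
    by (simp add: exp_minus field_simps power2_eq_square)
  ultimately show ?thesis by (simp flip: exp_add)
qed

theorem proposition4p3:
  shows "(\<forall>\<alpha> \<beta>::real. 0 < \<alpha> \<and> \<alpha> \<le> \<beta> \<longrightarrow>
            (\<exists>c0 c1::real. c0 > 0 \<and> c1 > 0 \<and>
               (\<forall>a b (\<mu>::real measure) (t::real) (z::complex).
                  special_bernstein a b \<mu> \<and> t > 0 \<and> Re z \<ge> 0 \<and>
                  \<alpha> \<le> t * cmod z \<and> t * cmod z \<le> \<beta> \<longrightarrow>
                  c0 * rate_fun a b \<mu> t \<le> cmod (bernstein_fun a b \<mu> z) \<and>
                  cmod (bernstein_fun a b \<mu> z) \<le> c1 * rate_fun a b \<mu> t)))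
       \<and> (\<forall>a b (\<mu>::real measure) (t::real) (z::complex).
            special_bernstein a b \<mu> \<and> t > 0 \<and> Re z \<ge> 0 \<and> t * cmod z = 1 \<longrightarrow>
            rate_fun a b \<mu> t / (3 * exp 2) \<le> cmod (bernstein_fun a b \<mu> z))"
proof (intro conjI allI impI)
  fix \<alpha> \<beta> :: real assume ab: "0 < \<alpha> \<and> \<alpha> \<le> \<beta>"
  show "\<exists>c0 c1::real. c0 > 0 \<and> c1 > 0 \<and>
               (\<forall>a b (\<mu>::real measure) (t::real) (z::complex).
                  special_bernstein a b \<mu> \<and> t > 0 \<and> Re z \<ge> 0 \<and>
                  \<alpha> \<le> t * cmod z \<and> t * cmod z \<le> \<beta> \<longrightarrow>
                  c0 * rate_fun a b \<mu> t \<le> cmod (bernstein_fun a b \<mu> z) \<and>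
                  cmod (bernstein_fun a b \<mu> z) \<le> c1 * rate_fun a b \<mu> t)"
  proof (intro exI conjI allI impI)
    show "\<alpha> * (1 - exp (-1))^2 / max 2 \<beta> > 0" "max 2 \<beta> > 0" using ab by auto
    fix a b \<mu> t z
    assume "special_bernstein a b \<mu> \<and> t > 0 \<and> Re z \<ge> 0 \<and> \<alpha> \<le> t * cmod z \<and> t * cmod z \<le> \<beta>"
    then show "\<alpha> * (1 - exp (-1))^2 / max 2 \<beta> * rate_fun a b \<mu> t \<le> cmod (bernstein_fun a b \<mu> z)"
      and "cmod (bernstein_fun a b \<mu> z) \<le> max 2 \<beta> * rate_fun a b \<mu> t"
      using special_bernstein_lower ab bernstein_fun_upper by (auto simp: special_bernstein_def)
  qed
next
  fix a b \<mu> t z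
  assume h: "special_bernstein a b \<mu> \<and> t > 0 \<and> Re z \<ge> 0 \<and> t * cmod z = 1"
  then have "rate_fun a b \<mu> t \<ge> 0" using rate_fun_nonneg by (auto simp: special_bernstein_def)
  then have "rate_fun a b \<mu> t / (3 * exp 2) \<le> (1 - exp (-1))^2 / 2 * rate_fun a b \<mu> t"
    using mult_right_mono[OF explicit_constant_le] by simp
  also have "\<dots> \<le> cmod (bernstein_fun a b \<mu> z)"
    using special_bernstein_lower[of a b \<mu> t z 1 1] h by simp
  finally show "rate_fun a b \<mu> t / (3 * exp 2) \<le> cmod (bernstein_fun a b \<mu> z)" .
qed

end
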